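(* Write \[ \frac{2q J_{20}^{15} J_{2,20} J_{10,20}}{J_{1,20}^3 J_{3,20}^2 J_{4,20}^2 J_{5,20}^2 J_{6,20} J_{7,20}^2 J_{9,20}^3} = \sum_{n\ge 1} b''(n) q^n . \] Then $b''(n) \ge 2n$ for all $n \ge 1$.
   Context: Notation: $(a;q)_\infty = \prod_{i\ge 0}(1-aq^i)$ and $(a_1,\dots,a_k;q)_\infty = (a_1;q)_\infty\cdots(a_k;q)_\infty$. For positive integers $a<b$: $J_b = (q^b;q^b)_\infty$ and $J_{a,b} = (q^a, q^{b-a}, q^b; q^b)_\infty$. *)

theory Defs
  imports "HOL-Computational_Algebra.Formal_Power_Series"
begin

text \<open>(q^a; q^b)_\<infinity> = prod_{i>=0} (1 - q^(a+b*i)) as a formal power series in q.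
  For a \<ge> 1, b \<ge> 1 the n-th coefficient of the infinite product equals that of
  the finite product over i \<le> n (all further factors are 1 + O(q^(n+1))).\<close>
definition qpoch :: "nat \<Rightarrow> nat \<Rightarrow> real fps" where
  "qpoch a b = Abs_fps (\<lambda>n. fps_nth (\<Prod>i\<le>n. (1 - fps_X ^ (a + b * i))) n)"

definition J :: "nat \<Rightarrow> real fps" where
  "J b = qpoch b b"

definition Jab :: "nat \<Rightarrow> nat \<Rightarrow> real fps" where
  "Jab a b = qpoch a b * qpoch (b - a) b * qpoch b b"

end

theory Submission
  imports Defs
begin

text \<open>Write \<open>P\<^sub>a = (q\<^sup>a; q\<^sup>2\<^sup>0)\<^sub>\<infinity>\<close>, so that \<open>J\<^sub>a\<^sub>,\<^sub>2\<^sub>0 = P\<^sub>a P\<^sub>2\<^sub>0\<^sub>-\<^sub>a J\<^sub>2\<^sub>0\<close>.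
  The identities \<open>P\<^sub>2\<^sub>a = P\<^sub>a P\<^sub>a\<^sub>+\<^sub>1\<^sub>0 (-q\<^sup>a; q\<^sup>1\<^sup>0)\<^sub>\<infinity>\<close>, \<open>P\<^sub>1 = (1 - q) P\<^sub>2\<^sub>1\<close> and
  \<open>J\<^sub>2\<^sub>0 = (q\<^sup>2\<^sup>0; q\<^sup>4\<^sup>0)\<^sub>\<infinity> (q\<^sup>4\<^sup>0; q\<^sup>4\<^sup>0)\<^sub>\<infinity>\<close>, with each of the last two factors split as
  \<open>(q\<^sup>a\<^sup>+\<^sup>b; q\<^sup>4\<^sup>0)\<^sub>\<infinity> = T\<^sub>a\<^sub>,\<^sub>b P\<^sub>a P\<^sub>b\<close> for \<open>(a, b) = (9, 11), (19, 21)\<close>, cancel the quotient down to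
  \<open>2q R / (1 - q)\<^sup>2\<close>. Here \<open>R\<close> is a product of series \<open>(-q\<^sup>a; q\<^sup>1\<^sup>0)\<^sub>\<infinity>\<close>, inverses \<open>1 / P\<^sub>a\<close>
  and the \<open>T\<^sub>a\<^sub>,\<^sub>b\<close>, all with nonnegative coefficients because each factor of \<open>T\<^sub>a\<^sub>,\<^sub>b\<close> is
  \<open>(1 - x\<^sup>A\<^sup>+\<^sup>B) / ((1 - x\<^sup>A) (1 - x\<^sup>B)) = 1 / (1 - x\<^sup>B) + x\<^sup>A / (1 - x\<^sup>A)\<close>.
  Since \<open>R\<close> has constant term 1, the coefficient of \<open>q\<^sup>n\<close> is at least that of \<open>2q / (1 - q)\<^sup>2\<close>,
  namely \<open>2n\<close>.\<close>

unbundle fps_syntax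

section \<open>Infinite products of formal power series\<close>

definition fps_agree :: "nat \<Rightarrow> 'a fps \<Rightarrow> 'a fps \<Rightarrow> bool" where
  "fps_agree n f g \<longleftrightarrow> (\<forall>k\<le>n. f $ k = g $ k)"

lemma fps_agree_refl [simp]: "fps_agree n f f"
  by (simp add: fps_agree_def)

lemma fps_agree_sym: "fps_agree n f g \<Longrightarrow> fps_agree n g f"
  by (simp add: fps_agree_def)

lemma fps_agree_trans [trans]: "fps_agree n f g \<Longrightarrow> fps_agree n g h \<Longrightarrow> fps_agree n f h"
  by (simp add: fps_agree_def)

lemma fps_agree_mono: "fps_agree m f g \<Longrightarrow> n \<le> m \<Longrightarrow> fps_agree n f g"
  by (simp add: fps_agree_def)

lemma fps_eqI_agree: "(\<And>n. fps_agree n f g) \<Longrightarrow> f = g"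
  by (rule fps_ext) (auto simp: fps_agree_def)

lemma fps_agree_mult:
  fixes f f' g g' :: "'a::comm_ring_1 fps"
  assumes f: "fps_agree n f f'" and g: "fps_agree n g g'"
  shows "fps_agree n (f * g) (f' * g')"
  unfolding fps_agree_def fps_mult_nth
proof (intro allI impI sum.cong[OF refl])
  fix k i assume "k \<le> n" "i \<in> {0..k}"
  then show "f $ i * g $ (k - i) = f' $ i * g' $ (k - i)"
    using f g by (simp add: fps_agree_def)
qed

lemma fps_agree_inverse:
  fixes f g :: "'a::field fps"
  assumes fg: "fps_agree n f g" and f0: "f $ 0 \<noteq> 0"
  shows "fps_agree n (inverse f) (inverse g)"
proof -
  have g0: "g $ 0 \<noteq> 0"
    using fg f0 by (simp add: fps_agree_def)
  have "fps_agree n (inverse f * f * inverse g) (inverse f * g * inverse g)"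
    by (intro fps_agree_mult fps_agree_refl fg)
  also have "inverse f * f * inverse g = inverse g"
    using inverse_mult_eq_1[OF f0] by simp
  also have "inverse f * g * inverse g = inverse f"
    using inverse_mult_eq_1'[OF g0] by (simp add: mult.assoc)
  finally show ?thesis
    by (rule fps_agree_sym)
qed

text \<open>Factor \<open>i\<close> of an admissible sequence is \<open>1 + O(q\<^sup>i\<^sup>+\<^sup>1)\<close>, so coefficient \<open>n\<close>
  of the infinite product is already that of the finite product of the factors \<open>i \<le> n\<close>.\<close>

definition infprod_admissible :: "(nat \<Rightarrow> 'a::comm_ring_1 fps) \<Rightarrow> bool" where
  "infprod_admissible f \<longleftrightarrow> (\<forall>i. fps_agree i (f i) 1)"

definition fps_infprod :: "(nat \<Rightarrow> 'a::comm_ring_1 fps) \<Rightarrow> 'a fps" where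
  "fps_infprod f = Abs_fps (\<lambda>n. (\<Prod>i\<le>n. f i) $ n)"

lemma infprod_admissible_nth_0: "infprod_admissible f \<Longrightarrow> f i $ 0 = 1"
  unfolding infprod_admissible_def fps_agree_def by auto

lemma infprod_admissible_mult:
  "infprod_admissible f \<Longrightarrow> infprod_admissible g \<Longrightarrow> infprod_admissible (\<lambda>i. f i * g i)"
  unfolding infprod_admissible_def using fps_agree_mult[of _ "f _" 1 "g _" 1] by simp

lemma infprod_admissible_inverse:
  fixes f :: "nat \<Rightarrow> 'a::field fps"
  assumes "infprod_admissible f"
  shows "infprod_admissible (\<lambda>i. inverse (f i))"
  unfolding infprod_admissible_def
proof
  fix i
  have "fps_agree i (inverse (f i)) (inverse 1)"
    using assms by (intro fps_agree_inverse) (auto simp: infprod_admissible_def infprod_admissible_nth_0)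
  then show "fps_agree i (inverse (f i)) 1"
    by simp
qed

lemma infprod_admissible_reindex:
  assumes "infprod_admissible f" "\<And>i. i \<le> r i"
  shows "infprod_admissible (\<lambda>i. f (r i))"
  using assms unfolding infprod_admissible_def by (meson fps_agree_mono)

lemma infprod_admissible_one_minus_X_power:
  "(\<And>i. i < e i) \<Longrightarrow> infprod_admissible (\<lambda>i. 1 - fps_X ^ e i)"
  unfolding infprod_admissible_def fps_agree_def by (auto simp: not_le)

lemma infprod_admissible_one_plus_X_power:
  "(\<And>i. i < e i) \<Longrightarrow> infprod_admissible (\<lambda>i. 1 + fps_X ^ e i)"
  unfolding infprod_admissible_def fps_agree_def by (auto simp: not_le)

lemma prod_atMost_agree:
  assumes "infprod_admissible f" "n \<le> N"
  shows "fps_agree n (\<Prod>i\<le>N. f i) (\<Prod>i\<le>n. f i)"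
  using assms(2)
proof (induction N)
  case (Suc N)
  show ?case
  proof (cases "n = Suc N")
    case False
    then have "n \<le> N"
      using Suc.prems by simp
    moreover have "fps_agree n (f (Suc N)) 1"
      using assms(1) \<open>n \<le> N\<close> unfolding infprod_admissible_def by (meson fps_agree_mono le_SucI)
    ultimately have "fps_agree n ((\<Prod>i\<le>N. f i) * f (Suc N)) ((\<Prod>i\<le>n. f i) * 1)"
      using Suc.IH by (intro fps_agree_mult)
    then show ?thesis
      by simp
  qed simp
qed simp

lemma fps_infprod_agree:
  assumes "infprod_admissible f" "n \<le> N"
  shows "fps_agree n (fps_infprod f) (\<Prod>i\<le>N. f i)"
  using prod_atMost_agree[OF assms(1)] assms(2)
  by (auto simp: fps_agree_def fps_infprod_def)

lemma fps_infprod_nth_0: "infprod_admissible f \<Longrightarrow> fps_infprod f $ 0 = 1"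
  by (simp add: fps_infprod_def infprod_admissible_nth_0)

lemma fps_infprod_const_1: "fps_infprod (\<lambda>_. 1) = 1"
  by (rule fps_ext) (simp add: fps_infprod_def)

lemma fps_infprod_mult:
  assumes "infprod_admissible f" "infprod_admissible g"
  shows "fps_infprod (\<lambda>i. f i * g i) = fps_infprod f * fps_infprod g"
proof (rule fps_eqI_agree)
  fix n
  have "fps_agree n (fps_infprod (\<lambda>i. f i * g i)) (\<Prod>i\<le>n. f i * g i)"
    using assms by (intro fps_infprod_agree infprod_admissible_mult) auto
  moreover have "fps_agree n (fps_infprod f * fps_infprod g) ((\<Prod>i\<le>n. f i) * (\<Prod>i\<le>n. g i))"
    using assms by (intro fps_agree_mult fps_infprod_agree) auto
  ultimately show "fps_agree n (fps_infprod (\<lambda>i. f i * g i)) (fps_infprod f * fps_infprod g)"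
    unfolding prod.distrib by (meson fps_agree_sym fps_agree_trans)
qed

lemma fps_infprod_unfold:
  assumes "infprod_admissible f"
  shows "fps_infprod f = f 0 * fps_infprod (\<lambda>i. f (Suc i))"
proof (rule fps_eqI_agree)
  fix n
  have "fps_agree n (fps_infprod f) (\<Prod>i\<le>Suc n. f i)"
    using assms by (rule fps_infprod_agree) simp
  also have "(\<Prod>i\<le>Suc n. f i) = f 0 * (\<Prod>i\<le>n. f (Suc i))"
    by (rule prod.atMost_Suc_shift)
  also have "fps_agree n (f 0 * (\<Prod>i\<le>n. f (Suc i))) (f 0 * fps_infprod (\<lambda>i. f (Suc i)))"
    using infprod_admissible_reindex[OF assms, of Suc]
    by (intro fps_agree_mult fps_agree_refl fps_agree_sym[OF fps_infprod_agree]) auto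
  finally show "fps_agree n (fps_infprod f) (f 0 * fps_infprod (\<lambda>i. f (Suc i)))" .
qed

lemma prod_lessThan_double:
  fixes f :: "nat \<Rightarrow> 'a::comm_monoid_mult"
  shows "(\<Prod>i<2 * m. f i) = (\<Prod>i<m. f (2 * i) * f (2 * i + 1))"
  by (induction m) (simp_all add: mult.assoc)

lemma fps_infprod_pairs:
  assumes f: "infprod_admissible f"
  shows "fps_infprod f = fps_infprod (\<lambda>i. f (2 * i) * f (2 * i + 1))"
proof (rule fps_eqI_agree)
  fix n
  have "infprod_admissible (\<lambda>i. f (2 * i))" "infprod_admissible (\<lambda>i. f (2 * i + 1))"
    by (rule infprod_admissible_reindex[OF f]; simp)+
  then have pairs: "infprod_admissible (\<lambda>i. f (2 * i) * f (2 * i + 1))"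
    by (rule infprod_admissible_mult)
  have "{..2 * n + 1} = {..<2 * Suc n}" "{..n} = {..<Suc n}"
    by auto
  then have "(\<Prod>i\<le>2 * n + 1. f i) = (\<Prod>i\<le>n. f (2 * i) * f (2 * i + 1))"
    by (simp only: prod_lessThan_double)
  then have "fps_agree n (fps_infprod f) (\<Prod>i\<le>n. f (2 * i) * f (2 * i + 1))"
    using fps_infprod_agree[OF f, of n "2 * n + 1"] by simp
  also have "fps_agree n \<dots> (fps_infprod (\<lambda>i. f (2 * i) * f (2 * i + 1)))"
    by (rule fps_agree_sym[OF fps_infprod_agree[OF pairs]]) simp
  finally show "fps_agree n (fps_infprod f) (fps_infprod (\<lambda>i. f (2 * i) * f (2 * i + 1)))" .
qed

lemma fps_inverse_infprod:
  fixes f :: "nat \<Rightarrow> 'a::field fps"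
  assumes "infprod_admissible f"
  shows "inverse (fps_infprod f) = fps_infprod (\<lambda>i. inverse (f i))"
proof (rule fps_inverse_unique)
  have "fps_infprod f * fps_infprod (\<lambda>i. inverse (f i)) = fps_infprod (\<lambda>i. f i * inverse (f i))"
    using assms by (intro fps_infprod_mult[symmetric] infprod_admissible_inverse)
  also have "(\<lambda>i. f i * inverse (f i)) = (\<lambda>_. 1)"
    using assms by (auto intro!: inverse_mult_eq_1' simp: infprod_admissible_nth_0)
  finally show "fps_infprod f * fps_infprod (\<lambda>i. inverse (f i)) = 1"
    by (simp add: fps_infprod_const_1)
qed

section \<open>\<open>q\<close>-Pochhammer symbols\<close>

lemma less_add_mult_self: "1 \<le> a \<Longrightarrow> 1 \<le> b \<Longrightarrow> i < a + b * (i::nat)"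
proof -
  assume "1 \<le> a" "1 \<le> b"
  then have "i \<le> b * i"
    by simp
  with \<open>1 \<le> a\<close> show ?thesis
    by linarith
qed

lemma infprod_admissible_qpoch_factors:
  "1 \<le> a \<Longrightarrow> 1 \<le> b \<Longrightarrow> infprod_admissible (\<lambda>i. 1 - fps_X ^ (a + b * i) :: real fps)"
  by (intro infprod_admissible_one_minus_X_power less_add_mult_self)

lemma qpoch_conv_fps_infprod: "qpoch a b = fps_infprod (\<lambda>i. 1 - fps_X ^ (a + b * i))"
  by (simp add: qpoch_def fps_infprod_def)

lemma qpoch_nth_0: "1 \<le> a \<Longrightarrow> 1 \<le> b \<Longrightarrow> qpoch a b $ 0 = 1"
  unfolding qpoch_conv_fps_infprod by (intro fps_infprod_nth_0 infprod_admissible_qpoch_factors)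

lemma Jab_nth_0: "1 \<le> a \<Longrightarrow> a < b \<Longrightarrow> Jab a b $ 0 = 1"
  by (simp add: Jab_def qpoch_nth_0)

lemma qpoch_unfold:
  assumes "1 \<le> a" "1 \<le> b"
  shows "qpoch a b = (1 - fps_X ^ a) * qpoch (a + b) b"
  unfolding qpoch_conv_fps_infprod
  by (subst fps_infprod_unfold[OF infprod_admissible_qpoch_factors[OF assms]]) (simp add: algebra_simps)

lemma qpoch_split_parity:
  assumes "1 \<le> a" "1 \<le> b"
  shows "qpoch a b = qpoch a (2 * b) * qpoch (a + b) (2 * b)"
proof -
  have "qpoch a b = fps_infprod (\<lambda>i. (1 - fps_X ^ (a + b * (2 * i))) * (1 - fps_X ^ (a + b * (2 * i + 1))))"
    unfolding qpoch_conv_fps_infprod by (rule fps_infprod_pairs[OF infprod_admissible_qpoch_factors[OF assms]])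
  also have "\<dots> = fps_infprod (\<lambda>i. (1 - fps_X ^ (a + 2 * b * i)) * (1 - fps_X ^ (a + b + 2 * b * i)))"
    by (simp add: algebra_simps)
  also have "\<dots> = qpoch a (2 * b) * qpoch (a + b) (2 * b)"
    unfolding qpoch_conv_fps_infprod using assms
    by (intro fps_infprod_mult infprod_admissible_qpoch_factors) auto
  finally show ?thesis .
qed

definition neg_qpoch :: "nat \<Rightarrow> nat \<Rightarrow> real fps" where
  "neg_qpoch a b = fps_infprod (\<lambda>i. 1 + fps_X ^ (a + b * i))"

lemma infprod_admissible_neg_qpoch_factors:
  "1 \<le> a \<Longrightarrow> 1 \<le> b \<Longrightarrow> infprod_admissible (\<lambda>i. 1 + fps_X ^ (a + b * i) :: real fps)"
  by (intro infprod_admissible_one_plus_X_power less_add_mult_self)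

lemma neg_qpoch_nth_0: "1 \<le> a \<Longrightarrow> 1 \<le> b \<Longrightarrow> neg_qpoch a b $ 0 = 1"
  unfolding neg_qpoch_def by (intro fps_infprod_nth_0 infprod_admissible_neg_qpoch_factors)

lemma qpoch_double:
  assumes "1 \<le> a" "1 \<le> b"
  shows "qpoch (2 * a) (2 * b) = qpoch a b * neg_qpoch a b"
proof -
  have "(1 - fps_X ^ (2 * a + 2 * b * i) :: real fps)
      = (1 - fps_X ^ (a + b * i)) * (1 + fps_X ^ (a + b * i))" for i
    by (simp add: algebra_simps flip: power_add)
  then show ?thesis
    unfolding qpoch_conv_fps_infprod neg_qpoch_def using assms
    by (simp add: fps_infprod_mult infprod_admissible_qpoch_factors infprod_admissible_neg_qpoch_factors)
qed

definition qpoch_ratio :: "nat \<Rightarrow> nat \<Rightarrow> nat \<Rightarrow> real fps" where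
  "qpoch_ratio a b d = fps_infprod (\<lambda>t. (1 - fps_X ^ (a + b + 2 * d * t))
     * inverse (1 - fps_X ^ (a + d * t)) * inverse (1 - fps_X ^ (b + d * t)))"

lemma infprod_admissible_qpoch_ratio_factors:
  "1 \<le> a \<Longrightarrow> 1 \<le> b \<Longrightarrow> 1 \<le> d \<Longrightarrow> infprod_admissible (\<lambda>t. (1 - fps_X ^ (a + b + 2 * d * t))
     * inverse (1 - fps_X ^ (a + d * t)) * inverse (1 - fps_X ^ (b + d * t)) :: real fps)"
  by (intro infprod_admissible_mult infprod_admissible_inverse infprod_admissible_qpoch_factors[of "a + b" "2 * d", simplified mult.assoc]
      infprod_admissible_qpoch_factors) auto

lemma qpoch_ratio_nth_0: "1 \<le> a \<Longrightarrow> 1 \<le> b \<Longrightarrow> 1 \<le> d \<Longrightarrow> qpoch_ratio a b d $ 0 = 1"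
  unfolding qpoch_ratio_def by (intro fps_infprod_nth_0 infprod_admissible_qpoch_ratio_factors)

lemma qpoch_eq_qpoch_ratio:
  assumes "1 \<le> a" "1 \<le> b" "1 \<le> d"
  shows "qpoch (a + b) (2 * d) = qpoch_ratio a b d * qpoch a d * qpoch b d"
proof -
  have cancel: "(1 - fps_X ^ (a + b + 2 * d * t)) * inverse (1 - fps_X ^ (a + d * t))
        * inverse (1 - fps_X ^ (b + d * t)) * (1 - fps_X ^ (a + d * t)) * (1 - fps_X ^ (b + d * t))
      = (1 - fps_X ^ (a + b + 2 * d * t) :: real fps)" for t
  proof -
    have inv: "inverse (1 - fps_X ^ e) * (1 - fps_X ^ e) = (1 :: real fps)" if "1 \<le> e" for e
      using that by (intro inverse_mult_eq_1) simp
    have "(1 - fps_X ^ (a + b + 2 * d * t)) * inverse (1 - fps_X ^ (a + d * t))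
        * inverse (1 - fps_X ^ (b + d * t)) * (1 - fps_X ^ (a + d * t)) * (1 - fps_X ^ (b + d * t))
      = (1 - fps_X ^ (a + b + 2 * d * t) :: real fps)
        * (inverse (1 - fps_X ^ (a + d * t)) * (1 - fps_X ^ (a + d * t)))
        * (inverse (1 - fps_X ^ (b + d * t)) * (1 - fps_X ^ (b + d * t)))"
      by (simp only: ac_simps)
    then show ?thesis
      using assms by (simp add: inv)
  qed
  have "qpoch_ratio a b d * qpoch a d * qpoch b d
      = fps_infprod (\<lambda>t. (1 - fps_X ^ (a + b + 2 * d * t)) * inverse (1 - fps_X ^ (a + d * t))
        * inverse (1 - fps_X ^ (b + d * t)) * (1 - fps_X ^ (a + d * t)) * (1 - fps_X ^ (b + d * t)))"
    unfolding qpoch_ratio_def qpoch_conv_fps_infprod using assms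
    by (simp add: fps_infprod_mult infprod_admissible_mult infprod_admissible_qpoch_factors
        infprod_admissible_qpoch_ratio_factors)
  then show ?thesis
    unfolding cancel qpoch_conv_fps_infprod by (simp add: algebra_simps)
qed

section \<open>Nonnegative coefficients\<close>

definition fps_nonneg :: "'a::linordered_semidom fps \<Rightarrow> bool" where
  "fps_nonneg f \<longleftrightarrow> (\<forall>k. 0 \<le> f $ k)"

lemma fps_nonneg_one: "fps_nonneg 1"
  by (simp add: fps_nonneg_def)

lemma fps_nonneg_X_power: "fps_nonneg (fps_X ^ e)"
  by (simp add: fps_nonneg_def)

lemma fps_nonneg_add: "fps_nonneg f \<Longrightarrow> fps_nonneg g \<Longrightarrow> fps_nonneg (f + g)"
  by (simp add: fps_nonneg_def)

lemma fps_nonneg_mult: "fps_nonneg f \<Longrightarrow> fps_nonneg g \<Longrightarrow> fps_nonneg (f * g)"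
  unfolding fps_nonneg_def fps_mult_nth by (auto intro!: sum_nonneg)

lemma fps_nonneg_power: "fps_nonneg f \<Longrightarrow> fps_nonneg (f ^ n)"
  by (induction n) (simp_all add: fps_nonneg_one fps_nonneg_mult)

lemma fps_nonneg_prod: "(\<And>i. i \<in> I \<Longrightarrow> fps_nonneg (f i)) \<Longrightarrow> fps_nonneg (\<Prod>i\<in>I. f i)"
  by (induction I rule: infinite_finite_induct) (simp_all add: fps_nonneg_one fps_nonneg_mult)

lemma fps_nonneg_infprod:
  fixes f :: "nat \<Rightarrow> 'a::{linordered_semidom, comm_ring_1} fps"
  shows "(\<And>i. fps_nonneg (f i)) \<Longrightarrow> fps_nonneg (fps_infprod f)"
  using fps_nonneg_prod[of "{.._}" f] by (simp add: fps_nonneg_def fps_infprod_def)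

lemma inverse_one_minus_fps_X_power:
  assumes "1 \<le> e"
  shows "inverse (1 - fps_X ^ e :: 'a::field fps) = Abs_fps (\<lambda>k. if e dvd k then 1 else 0)"
proof (rule fps_inverse_unique, rule fps_ext)
  fix k
  have "e dvd k \<longleftrightarrow> k = 0" if "k < e"
    using that assms by (auto dest: dvd_imp_le)
  moreover have "e dvd k \<longleftrightarrow> e dvd (k - e)" if "\<not> k < e"
    using that by (simp add: dvd_minus_self)
  ultimately show "((1 - fps_X ^ e) * Abs_fps (\<lambda>k. if e dvd k then 1 else 0)) $ k = (1 :: 'a fps) $ k"
    using assms by (auto simp: algebra_simps fps_X_power_mult_nth)
qed

lemma fps_nonneg_inverse_one_minus_X_power:
  "1 \<le> e \<Longrightarrow> fps_nonneg (inverse (1 - fps_X ^ e :: 'a::linordered_field fps))"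
  by (simp add: inverse_one_minus_fps_X_power fps_nonneg_def)

lemma one_minus_X_power_add_div:
  assumes "1 \<le> A" "1 \<le> B"
  shows "(1 - fps_X ^ (A + B)) * inverse (1 - fps_X ^ A) * inverse (1 - fps_X ^ B)
       = inverse (1 - fps_X ^ B) + fps_X ^ A * inverse (1 - fps_X ^ A :: 'a::field fps)"
proof -
  have invA: "inverse (1 - fps_X ^ A) * (1 - fps_X ^ A) = (1 :: 'a fps)"
    and invB: "inverse (1 - fps_X ^ B) * (1 - fps_X ^ B) = (1 :: 'a fps)"
    using assms by (auto intro!: inverse_mult_eq_1)
  have "(1 - fps_X ^ (A + B)) * inverse (1 - fps_X ^ A) * inverse (1 - fps_X ^ B)
      = (inverse (1 - fps_X ^ A) * (1 - fps_X ^ A)) * inverse (1 - fps_X ^ B)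
        + fps_X ^ A * inverse (1 - fps_X ^ A) * (inverse (1 - fps_X ^ B) * (1 - fps_X ^ B) :: 'a fps)"
    by (simp add: power_add algebra_simps)
  then show ?thesis
    by (simp only: invA invB mult_1_left mult_1_right)
qed

lemma fps_nonneg_neg_qpoch: "fps_nonneg (neg_qpoch a b)"
  unfolding neg_qpoch_def by (intro fps_nonneg_infprod fps_nonneg_add fps_nonneg_one fps_nonneg_X_power)

lemma fps_nonneg_qpoch_ratio:
  assumes "1 \<le> a" "1 \<le> b"
  shows "fps_nonneg (qpoch_ratio a b d)"
  unfolding qpoch_ratio_def
proof (rule fps_nonneg_infprod)
  fix t
  have exp: "a + b + 2 * d * t = (a + d * t) + (b + d * t)"
    by simp
  have "(1 - fps_X ^ (a + b + 2 * d * t)) * inverse (1 - fps_X ^ (a + d * t))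
      * inverse (1 - fps_X ^ (b + d * t))
      = inverse (1 - fps_X ^ (b + d * t)) + fps_X ^ (a + d * t) * inverse (1 - fps_X ^ (a + d * t) :: real fps)"
    unfolding exp using assms by (intro one_minus_X_power_add_div) auto
  moreover have "fps_nonneg (inverse (1 - fps_X ^ (b + d * t)) + fps_X ^ (a + d * t) * inverse (1 - fps_X ^ (a + d * t) :: real fps))"
    using assms by (intro fps_nonneg_add fps_nonneg_mult fps_nonneg_X_power fps_nonneg_inverse_one_minus_X_power) auto
  ultimately show "fps_nonneg ((1 - fps_X ^ (a + b + 2 * d * t)) * inverse (1 - fps_X ^ (a + d * t))
      * inverse (1 - fps_X ^ (b + d * t)) :: real fps)"
    by (simp only:)
qed

lemma fps_nonneg_inverse_qpoch: "1 \<le> a \<Longrightarrow> 1 \<le> b \<Longrightarrow> fps_nonneg (inverse (qpoch a b))"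
  unfolding qpoch_conv_fps_infprod
  by (simp only: fps_inverse_infprod[OF infprod_admissible_qpoch_factors])
    (intro fps_nonneg_infprod fps_nonneg_inverse_one_minus_X_power; simp)

lemma nth_X_mult_inverse_one_minus_X_squared_ge:
  fixes R :: "real fps"
  assumes "fps_nonneg R" "R $ 0 = 1" "1 \<le> n"
  shows "real n \<le> (fps_X * inverse (1 - fps_X) ^ 2 * R) $ n"
proof -
  have ones: "inverse (1 - fps_X :: real fps) = Abs_fps (\<lambda>_. 1)"
    using inverse_one_minus_fps_X_power[of 1] by simp
  have "(inverse (1 - fps_X) ^ 2 * R) $ (n - 1) = (\<Sum>i=0..n-1. real (i + 1) * R $ (n - 1 - i))"
    unfolding ones power2_eq_square fps_mult_nth by (simp add: fps_mult_nth)
  also have "\<dots> \<ge> real (n - 1 + 1) * R $ (n - 1 - (n - 1))"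
    using assms(1) by (intro member_le_sum) (auto simp: fps_nonneg_def)
  finally show ?thesis
    using assms(2,3) by (simp add: mult.assoc)
qed

text \<open>The variables stand for \<open>P\<^sub>a\<close>, \<open>E = J\<^sub>2\<^sub>0\<close>, \<open>T\<^sub>9\<^sub>,\<^sub>1\<^sub>1\<close>, \<open>T\<^sub>1\<^sub>9\<^sub>,\<^sub>2\<^sub>1\<close>, \<open>M\<^sub>a = (-q\<^sup>a; q\<^sup>1\<^sup>0)\<^sub>\<infinity>\<close>
  and \<open>x = 1 - q\<close>; the hypotheses are the factorizations used in the cancellation.\<close>

lemma theta_quotient_cancellation:
  fixes P1 P2 P3 P4 P5 P6 P7 P9 P10 P11 P13 P14 P15 P16 P17 P18 P19 P21 E T1 T2 M1 M5 M9 x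
    :: "'a::comm_ring_1"
  assumes "P2 = P1 * P11 * M1" "P18 = P9 * P19 * M9" "P10 = P5 * P15 * M5"
    and "E = T1 * P9 * P11 * T2 * P19 * P21" "P1 = x * P21"
  shows "E ^ 15 * (P2 * P18 * E) * (P10 * P10 * E) *
           (x ^ 2 * (P3 ^ 2 * P17 ^ 2 * P4 ^ 2 * P16 ^ 2 * P6 * P14 * P7 ^ 2 * P13 ^ 2))
       = T1 ^ 2 * T2 ^ 2 * M1 * M9 * M5 ^ 2 *
           ((P1 * P19 * E) ^ 3 * (P3 * P17 * E) ^ 2 * (P4 * P16 * E) ^ 2 * (P5 * P15 * E) ^ 2 *
            (P6 * P14 * E) * (P7 * P13 * E) ^ 2 * (P9 * P11 * E) ^ 3)"
proof -
  have "E ^ 2 = (T1 * T2 * P9 * P11 * P19 * P21) ^ 2"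
    using assms(4) by (simp add: ac_simps)
  then show ?thesis
    unfolding assms(1-3,5) by (simp add: power_mult_distrib power2_eq_square eval_nat_numeral ac_simps)
qed

lemma fps_mult_inverse_eq_mult_inverse:
  fixes a b f g :: "'a::field fps"
  assumes "f $ 0 \<noteq> 0" "g $ 0 \<noteq> 0" "a * g = b * f"
  shows "a * inverse f = b * inverse g"
proof -
  have "a * inverse f = (a * g) * inverse f * inverse g"
    using inverse_mult_eq_1'[OF assms(2)] by (simp add: ac_simps)
  also have "\<dots> = b * inverse g * (f * inverse f)"
    unfolding assms(3) by (simp only: ac_simps)
  finally show ?thesis
    using inverse_mult_eq_1'[OF assms(1)] by simp
qed

lemma theta_quotient_factorization:
  "J 20 ^ 15 * Jab 2 20 * Jab 10 20 *
     inverse (Jab 1 20 ^ 3 * Jab 3 20 ^ 2 * Jab 4 20 ^ 2 * Jab 5 20 ^ 2 * Jab 6 20 *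
              Jab 7 20 ^ 2 * Jab 9 20 ^ 3)
   = inverse (1 - fps_X) ^ 2 *
     (qpoch_ratio 9 11 20 ^ 2 * qpoch_ratio 19 21 20 ^ 2 * neg_qpoch 1 10 * neg_qpoch 9 10 *
      neg_qpoch 5 10 ^ 2 *
      inverse (qpoch 3 20 ^ 2 * qpoch 17 20 ^ 2 * qpoch 4 20 ^ 2 * qpoch 16 20 ^ 2 *
               qpoch 6 20 * qpoch 14 20 * qpoch 7 20 ^ 2 * qpoch 13 20 ^ 2))"
  (is "?N * inverse ?Den = inverse (1 - fps_X) ^ 2 * (?H * inverse ?D)")
proof -
  have q2: "qpoch 2 20 = qpoch 1 20 * qpoch 11 20 * neg_qpoch 1 10"
    using qpoch_double[of 1 10] qpoch_split_parity[of 1 10] by simp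
  have q18: "qpoch 18 20 = qpoch 9 20 * qpoch 19 20 * neg_qpoch 9 10"
    using qpoch_double[of 9 10] qpoch_split_parity[of 9 10] by simp
  have q10: "qpoch 10 20 = qpoch 5 20 * qpoch 15 20 * neg_qpoch 5 10"
    using qpoch_double[of 5 10] qpoch_split_parity[of 5 10] by simp
  have q20: "qpoch 20 20 = qpoch_ratio 9 11 20 * qpoch 9 20 * qpoch 11 20
      * qpoch_ratio 19 21 20 * qpoch 19 20 * qpoch 21 20"
    using qpoch_split_parity[of 20 20] qpoch_eq_qpoch_ratio[of 9 11 20] qpoch_eq_qpoch_ratio[of 19 21 20]
    by (simp add: ac_simps)
  have q1: "qpoch 1 20 = (1 - fps_X) * qpoch 21 20"
    using qpoch_unfold[of 1 20] by simp
  have "?N * ((1 - fps_X) ^ 2 * ?D) = ?H * ?Den"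
    using theta_quotient_cancellation[OF q2 q18 q10 q20 q1] by (simp add: J_def Jab_def)
  then have "?N * inverse ?Den = ?H * inverse ((1 - fps_X) ^ 2 * ?D)"
    by (intro fps_mult_inverse_eq_mult_inverse) (simp_all add: Jab_nth_0 qpoch_nth_0 fps_power_zeroth)
  then show ?thesis
    by (simp add: fps_inverse_mult fps_inverse_power ac_simps)
qed

theorem mainTheorem7:
  fixes b2 :: "nat \<Rightarrow> real"
  assumes "\<And>n. b2 n = fps_nth
      (2 * fps_X * J 20 ^ 15 * Jab 2 20 * Jab 10 20 *
       inverse (Jab 1 20 ^ 3 * Jab 3 20 ^ 2 * Jab 4 20 ^ 2 * Jab 5 20 ^ 2 * Jab 6 20 *
                Jab 7 20 ^ 2 * Jab 9 20 ^ 3)) n"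
  shows "\<forall>n\<ge>1. b2 n \<ge> 2 * real n"
proof (intro allI impI)
  fix n :: nat
  assume "n \<ge> 1"
  define R where "R = qpoch_ratio 9 11 20 ^ 2 * qpoch_ratio 19 21 20 ^ 2 * neg_qpoch 1 10 *
    neg_qpoch 9 10 * neg_qpoch 5 10 ^ 2 *
    inverse (qpoch 3 20 ^ 2 * qpoch 17 20 ^ 2 * qpoch 4 20 ^ 2 * qpoch 16 20 ^ 2 *
             qpoch 6 20 * qpoch 14 20 * qpoch 7 20 ^ 2 * qpoch 13 20 ^ 2)"
  have "fps_nonneg R"
    unfolding R_def fps_inverse_mult fps_inverse_power
    by (intro fps_nonneg_mult fps_nonneg_power fps_nonneg_qpoch_ratio fps_nonneg_neg_qpoch
        fps_nonneg_inverse_qpoch) simp_all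
  moreover have "R $ 0 = 1"
    by (simp add: R_def fps_power_zeroth qpoch_nth_0 neg_qpoch_nth_0 qpoch_ratio_nth_0)
  ultimately have "real n \<le> (fps_X * inverse (1 - fps_X) ^ 2 * R) $ n"
    using \<open>n \<ge> 1\<close> by (rule nth_X_mult_inverse_one_minus_X_squared_ge)
  moreover have "b2 n = 2 * (fps_X * inverse (1 - fps_X) ^ 2 * R) $ n"
    using assms[of n] theta_quotient_factorization unfolding R_def
    by (simp add: mult.assoc numeral_fps_const)
  ultimately show "b2 n \<ge> 2 * real n"
    by simp
qed

end
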